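(* For any $1 \leq i \neq j \leq r$ and $1 \leq s \leq l$, the graph with vertex set $V_i \cup V_j$ whose edges are the edges of $\mathcal{H}(V_i,V_j)$ of color $m_s$ contains no $K_{2,2}$ (4-cycle).
   Context: Let $r \geq 2$ and $l \geq 1$ be integers and $q$ a power of an odd prime. Let $\alpha_1, \dots, \alpha_r$ be distinct elements of $\mathbb{F}_q$, and let $m_1, \dots, m_l$ be distinct elements of $\mathbb{F}_q^* = \mathbb{F}_q\setminus\{0\}$ such that $m_s(\alpha_k - \alpha_i) \neq m_t(\alpha_k - \alpha_j)$ whenever $1 \leq s,t \leq l$ and $i,j,k$ are distinct integers in $\{1,\dots,r\}$. For $1 \leq i \leq r$ let $V_i = \mathbb{F}_q \times \mathbb{F}_q \times \{i\}$. For $x,y \in \mathbb{F}_q$, $a \in \mathbb{F}_q^*$, $s \in \{1,\dots,l\}$ let \[ e(x,y,a,m_s) = \{(x + \alpha_i m_s a,\; y + \alpha_i m_s a^2,\; i) : 1 \leq i \leq r\}. \] $\mathcal{H}$ is the $r$-uniform hypergraph with vertex set $V_1 \cup \dots \cup V_r$ and edge set $\{e(x,y,a,m_s) : x,y \in \mathbb{F}_q,\ a \in \mathbb{F}_q^*,\ 1 \leq s \leq l\}$; it is linear, so any pair of vertices lies in at most one edge of $\mathcal{H}$. For $i \neq j$, $\mathcal{H}(V_i,V_j)$ is the bipartite graph with parts $V_i$ and $V_j$ in which $u \in V_i$ and $w \in V_j$ are adjacent iff $\{u,w\} \subseteq e$ for some edge $e$ of $\mathcal{H}$. An edge $\{u,w\}$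 of $\mathcal{H}(V_i,V_j)$ has color $m_s$ if the (unique) edge $e$ of $\mathcal{H}$ containing $\{u,w\}$ is of the form $e(x,y,a,m_s)$. *)

theory Defs
  imports "HOL-Computational_Algebra.Primes"
begin

text \<open>Vertices of the hypergraph are triples (x, y, i) with x, y in the field and i the part index.\<close>

definition part :: "nat \<Rightarrow> ('a \<times> 'a \<times> nat) set" where
  "part i = UNIV \<times> UNIV \<times> {i}"

definition hedge :: "(nat \<Rightarrow> 'a::field) \<Rightarrow> nat \<Rightarrow> 'a \<Rightarrow> 'a \<Rightarrow> 'a \<Rightarrow> 'a \<Rightarrow> ('a \<times> 'a \<times> nat) set" where
  "hedge \<alpha> r x y a \<mu> = {(x + \<alpha> i * \<mu> * a, y + \<alpha> i * \<mu> * a^2, i) | i. i \<in> {1..r}}"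

definition color_adj :: "(nat \<Rightarrow> 'a::field) \<Rightarrow> nat \<Rightarrow> (nat \<Rightarrow> 'a) \<Rightarrow> nat \<Rightarrow> nat \<Rightarrow> nat
    \<Rightarrow> ('a \<times> 'a \<times> nat) \<Rightarrow> ('a \<times> 'a \<times> nat) \<Rightarrow> bool" where
  "color_adj \<alpha> r m s i j u w \<longleftrightarrow>
     ((u \<in> part i \<and> w \<in> part j) \<or> (u \<in> part j \<and> w \<in> part i)) \<and>
     (\<exists>x y a. a \<noteq> 0 \<and> {u, w} \<subseteq> hedge \<alpha> r x y a (m s))"

end

theory Submission
  imports Defs "HOL-Number_Theory.Residues"
begin

text \<open>
  A colour-m edge joining (x + \<alpha> i m a, y + \<alpha> i m a^2, i) to (x + \<alpha> j m a, y + \<alpha> j m a^2, j)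
  has coordinate differences dx = (\<alpha> j - \<alpha> i) m a and dy = (\<alpha> j - \<alpha> i) m a^2, so
  c dy = dx^2 with c = (\<alpha> j - \<alpha> i) m \<noteq> 0: the neighbours of u in V_j lie on the parabola
  c (Y - y_u) = (X - x_u)^2.  Subtracting the equations of the parabolas of two distinct points
  u, u' \<in> V_i leaves a linear equation 2 (x_u' - x_u) X = \<dots> where x_u' \<noteq> x_u since
  otherwise the first equation would also force y_u' = y_u; so in odd
  characteristic two such parabolas meet in at most one point.  Hence two vertices of V_i
  have at most one common neighbour in V_j, which excludes a 4-cycle.
\<close>

lemma two_neq_zero_if_odd_card:
  assumes "odd (card (UNIV :: 'a::{ring_1, finite} set))"
  shows "(2::'a) \<noteq> 0"
proof
  assume "(2::'a) = 0"
  then have "CHAR('a) dvd 2"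
    by (metis of_nat_eq_0_iff_char_dvd of_nat_numeral)
  moreover have "odd CHAR('a)"
    using assms CHAR_dvd_CARD dvd_trans by blast
  ultimately have "CHAR('a) = 1"
    using dvd_imp_le[of "CHAR('a)" 2] by (cases "CHAR('a)") (auto simp: less_Suc_eq)
  then show False
    by simp
qed

lemma parabolas_meet_at_most_once:
  fixes c :: "'a::field"
  assumes "c \<noteq> 0" and "(2::'a) \<noteq> 0" and "(a1, b1) \<noteq> (a2, b2)"
    and "c * (y - b1) = (x - a1)\<^sup>2" and "c * (y - b2) = (x - a2)\<^sup>2"
    and "c * (y' - b1) = (x' - a1)\<^sup>2" and "c * (y' - b2) = (x' - a2)\<^sup>2"
  shows "x = x' \<and> y = y'"
proof -
  have chord: "c * (b2 - b1) = (a2 - a1) * (2 * z - a1 - a2)"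
    if "c * (w - b1) = (z - a1)\<^sup>2" "c * (w - b2) = (z - a2)\<^sup>2" for z w
  proof -
    have "c * (b2 - b1) = c * (w - b1) - c * (w - b2)"
      by (simp add: algebra_simps)
    also have "\<dots> = (a2 - a1) * (2 * z - a1 - a2)"
      unfolding that by (simp add: power2_eq_square algebra_simps)
    finally show ?thesis .
  qed
  have "a2 - a1 \<noteq> 0"
    using chord[OF assms(4,5)] assms(1,3) by auto
  then have "2 * x - a1 - a2 = 2 * x' - a1 - a2"
    using chord[OF assms(4,5)] chord[OF assms(6,7)] mult_left_cancel by metis
  then have "x = x'"
    using assms(2) by auto
  then have "c * (y - b1) = c * (y' - b1)"
    using assms(4,6) by simp
  then have "y = y'"
    using assms(1) by simp
  with \<open>x = x'\<close> show ?thesis ..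
qed

definition color_arc :: "(nat \<Rightarrow> 'a::field) \<Rightarrow> (nat \<Rightarrow> 'a) \<Rightarrow> nat \<Rightarrow> nat \<Rightarrow> nat
    \<Rightarrow> ('a \<times> 'a \<times> nat) \<Rightarrow> ('a \<times> 'a \<times> nat) \<Rightarrow> bool" where
  "color_arc \<alpha> m s i j u w \<longleftrightarrow> snd (snd u) = i \<and> snd (snd w) = j \<and>
     (\<alpha> j - \<alpha> i) * m s * (fst (snd w) - fst (snd u)) = (fst w - fst u)\<^sup>2"

lemma hedge_points_color_arc:
  "color_arc \<alpha> m s i j (x + \<alpha> i * m s * a, y + \<alpha> i * m s * a\<^sup>2, i)
                        (x + \<alpha> j * m s * a, y + \<alpha> j * m s * a\<^sup>2, j)"
  unfolding color_arc_def by (simp add: power2_eq_square algebra_simps)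

lemma color_adj_imp_color_arc:
  assumes "color_adj \<alpha> r m s i j u w"
  shows "color_arc \<alpha> m s i j u w \<or> color_arc \<alpha> m s i j w u"
proof -
  obtain x y a where "{u, w} \<subseteq> hedge \<alpha> r x y a (m s)"
    using assms unfolding color_adj_def by blast
  then obtain k k' where
    u: "u = (x + \<alpha> k * m s * a, y + \<alpha> k * m s * a\<^sup>2, k)" and
    w: "w = (x + \<alpha> k' * m s * a, y + \<alpha> k' * m s * a\<^sup>2, k')"
    unfolding hedge_def by blast
  have "(k = i \<and> k' = j) \<or> (k = j \<and> k' = i)"
    using assms u w unfolding color_adj_def part_def by auto
  then show ?thesis
    using hedge_points_color_arc u w by metis
qed

lemma color_arc_common_neighbour_unique:
  fixes \<alpha> m :: "nat \<Rightarrow> 'a::field"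
  assumes "(\<alpha> j - \<alpha> i) * m s \<noteq> 0" and "(2::'a) \<noteq> 0" and "u \<noteq> u'"
    and "color_arc \<alpha> m s i j u w" "color_arc \<alpha> m s i j u' w"
    and "color_arc \<alpha> m s i j u w'" "color_arc \<alpha> m s i j u' w'"
  shows "w = w'"
proof -
  obtain a b a' b' x y x' y' where
    "u = (a, b, i)" "u' = (a', b', i)" "w = (x, y, j)" "w' = (x', y', j)"
    using assms(4-7) unfolding color_arc_def by (metis prod.collapse)
  then show ?thesis
    using parabolas_meet_at_most_once[OF assms(1,2), of a b a' b' y x y' x'] assms(3-7)
    unfolding color_arc_def by auto
qed

theorem lemma3p7:
  fixes \<alpha> m :: "nat \<Rightarrow> 'a::{field, finite}" and r l :: nat
  assumes q_odd_prime_power: "\<exists>p k. prime p \<and> odd p \<and> k \<ge> 1 \<and> card (UNIV :: 'a set) = p ^ k"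
    and r2: "r \<ge> 2" and l1: "l \<ge> 1"
    and alpha_inj: "inj_on \<alpha> {1..r}"
    and m_inj: "inj_on m {1..l}"
    and m_nz: "\<forall>s \<in> {1..l}. m s \<noteq> 0"
    and m_cond: "\<forall>s \<in> {1..l}. \<forall>t \<in> {1..l}. \<forall>i \<in> {1..r}. \<forall>j \<in> {1..r}. \<forall>k \<in> {1..r}.
                   i \<noteq> j \<and> i \<noteq> k \<and> j \<noteq> k \<longrightarrow> m s * (\<alpha> k - \<alpha> i) \<noteq> m t * (\<alpha> k - \<alpha> j)"
    and ij: "i \<in> {1..r}" "j \<in> {1..r}" "i \<noteq> j"
    and s: "s \<in> {1..l}"
  shows "\<not> (\<exists>v1 v2 v3 v4. distinct [v1, v2, v3, v4] \<and>
             color_adj \<alpha> r m s i j v1 v2 \<and> color_adj \<alpha> r m s i j v2 v3 \<and>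
             color_adj \<alpha> r m s i j v3 v4 \<and> color_adj \<alpha> r m s i j v4 v1)"
proof
  assume "\<exists>v1 v2 v3 v4. distinct [v1, v2, v3, v4] \<and>
             color_adj \<alpha> r m s i j v1 v2 \<and> color_adj \<alpha> r m s i j v2 v3 \<and>
             color_adj \<alpha> r m s i j v3 v4 \<and> color_adj \<alpha> r m s i j v4 v1"
  then obtain v1 v2 v3 v4 where distinct: "distinct [v1, v2, v3, v4]"
    and arcs: "color_arc \<alpha> m s i j v1 v2 \<or> color_arc \<alpha> m s i j v2 v1"
      "color_arc \<alpha> m s i j v2 v3 \<or> color_arc \<alpha> m s i j v3 v2"
      "color_arc \<alpha> m s i j v3 v4 \<or> color_arc \<alpha> m s i j v4 v3"
      "color_arc \<alpha> m s i j v4 v1 \<or> color_arc \<alpha> m s i j v1 v4"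
    using color_adj_imp_color_arc by metis
  have "odd (card (UNIV :: 'a set))"
    using q_odd_prime_power by auto
  then have two: "(2::'a) \<noteq> 0"
    by (rule two_neq_zero_if_odd_card)
  have "\<alpha> j \<noteq> \<alpha> i"
    using alpha_inj ij by (metis inj_on_eq_iff)
  then have c: "(\<alpha> j - \<alpha> i) * m s \<noteq> 0"
    using m_nz s by simp
  note unique = color_arc_common_neighbour_unique[of \<alpha> j i m s, OF c two]
  show False
  proof (cases "snd (snd v1) = i")
    case True
    then show False
      using unique[of v1 v3 v2 v4] arcs distinct ij(3) unfolding color_arc_def by auto
  next
    case False
    then show False
      using unique[of v2 v4 v1 v3] arcs distinct ij(3) unfolding color_arc_def by auto
  qed
qed

end
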